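(* Let $\mathbb{F}$ be a field with $\mathrm{Char}(\mathbb{F})\neq 2,3$. Every $2$-dimensional diassociative algebra $(V,\dashv,\vdash)$ over $\mathbb{F}$ whose product $\dashv$ is not identically zero is isomorphic to one of the following dialgebras $\{A,B\}$ (for some value of the indicated parameter), and dialgebras from different items are pairwise non-isomorphic: <ol> <li>$D_{13}^1(\delta_1)$: $A=\begin{pmatrix}0&0&0&0\\1&0&0&0\end{pmatrix}$, $B=\begin{pmatrix}0&0&0&0\\ \delta_1&0&0&0\end{pmatrix}$, $\delta_1\in\mathbb{F}$;</li> <li>$D_3^2$: $A=\begin{pmatrix}1&0&0&0\\0&0&0&0\end{pmatrix}$, $B=\begin{pmatrix}1&0&0&0\\0&0&0&0\end{pmatrix}$;</li> <li>$D_3^3$: $A=\begin{pmatrix}1&0&0&0\\0&0&0&0\end{pmatrix}$, $B=\begin{pmatrix}1&0&0&0\\0&1&0&0\end{pmatrix}$;</li> <li>$D_3^4$: $A=\begin{pmatrix}1&0&0&0\\0&1&0&0\end{pmatrix}$, $B=\begin{pmatrix}1&0&0&0\\0&1&0&0\end{pmatrix}$;</li> <li>$D_3^5(\delta_1)$: $A=\begin{pmatrix}\frac12&0&0&0\\0&0&\frac12&0\end{pmatrix}$, $B=\begin{pmatrix}\frac12&0&0&0\\ \delta_1&0&0&0\end{pmatrix}$, $\delta_1\in\mathbb{F}$;</li> <li>$D_3^6$: $A=\begin{pmatrix}\frac12&0&0&0\\0&0&\frac12&0\end{pmatrix}$, $B=\begin{pmatrix}\frac12&0&0&0\\0&\frac12&0&0\end{pmatrix}$;</li>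 <li>$D_3^7$: $A=\begin{pmatrix}\frac12&0&0&0\\0&0&\frac12&0\end{pmatrix}$, $B=\begin{pmatrix}\frac12&0&0&0\\0&0&\frac12&0\end{pmatrix}$;</li> <li>$D_3^8(\alpha_4)$: $A=B=\begin{pmatrix}\frac12&0&0&\alpha_4\\0&\frac12&\frac12&0\end{pmatrix}$, $\alpha_4\in\mathbb{F}$.</li> </ol>
   Context: Let $\mathbb{F}$ be a field. A diassociative algebra (associative dialgebra) is a vector space $V$ over $\mathbb{F}$ with two bilinear products $\dashv,\vdash$ satisfying, for all $x,y,z\in V$: $(x\dashv y)\dashv z=x\dashv(y\dashv z)$; $x\dashv(y\dashv z)=x\dashv(y\vdash z)$; $(x\vdash y)\dashv z=x\vdash(y\dashv z)$; $(x\dashv y)\vdash z=(x\vdash y)\vdash z$; $(x\vdash y)\vdash z=x\vdash(y\vdash z)$. Two such dialgebras are isomorphic if there is an invertible linear map $f$ with $f(x\dashv y)=f(x)\dashv' f(y)$ and $f(x\vdash y)=f(x)\vdash' f(y)$ for all $x,y$. For $\dim V=2$ with fixed basis $(e_1,e_2)$, a $2\times4$ matrix $\begin{pmatrix}\alpha_1&\alpha_2&\alpha_3&\alpha_4\\ \beta_1&\beta_2&\beta_3&\beta_4\end{pmatrix}$ encodes a bilinear product $\ast$ by $e_1\ast e_1=\alpha_1e_1+\beta_1e_2$, $e_1\ast e_2=\alpha_2e_1+\beta_2e_2$, $e_2\ast e_1=\alpha_3e_1+\beta_3e_2$, $e_2\ast e_2=\alpha_4e_1+\beta_4e_2$. A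 pair $\{A,B\}$ denotes the dialgebra whose product $\dashv$ is encoded by $A$ and whose product $\vdash$ is encoded by $B$. Entries such as $\frac12$ denote the corresponding elements of $\mathbb{F}$. *)

theory Defs
  imports Main
begin

text \<open>A 2-dimensional algebra over a field is modelled on the coordinate space
  F x F with the fixed basis e1 = (1,0), e2 = (0,1).  A bilinear product is encoded
  by its 2x4 structure matrix: row alpha = (a1,a2,a3,a4), row beta = (b1,b2,b3,b4).\<close>

datatype 'a tbl = Tbl 'a 'a 'a 'a 'a 'a 'a 'a
  (* Tbl a1 a2 a3 a4 b1 b2 b3 b4 *)

fun prod_of :: "'a::field tbl \<Rightarrow> 'a \<times> 'a \<Rightarrow> 'a \<times> 'a \<Rightarrow> 'a \<times> 'a" where
  "prod_of (Tbl a1 a2 a3 a4 b1 b2 b3 b4) (x1, x2) (y1, y2) =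
     (x1*y1*a1 + x1*y2*a2 + x2*y1*a3 + x2*y2*a4,
      x1*y1*b1 + x1*y2*b2 + x2*y1*b3 + x2*y2*b4)"

text \<open>The dialgebra {A,B}: left product encoded by A, right product by B.\<close>
definition diassoc :: "'a::field tbl \<Rightarrow> 'a tbl \<Rightarrow> bool" where
  "diassoc A B \<longleftrightarrow> (\<forall>x y z.
     (let L = prod_of A; R = prod_of B in
        L (L x y) z = L x (L y z) \<and>
        L x (L y z) = L x (R y z) \<and>
        L (R x y) z = R x (L y z) \<and>
        R (L x y) z = R (R x y) z \<and>
        R (R x y) z = R x (R y z)))"

fun linmap :: "'a::field \<Rightarrow> 'a \<Rightarrow> 'a \<Rightarrow> 'a \<Rightarrow> 'a \<times> 'a \<Rightarrow> 'a \<times> 'a" where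
  "linmap p q r s (x1, x2) = (p*x1 + q*x2, r*x1 + s*x2)"

definition dialg_iso :: "'a::field tbl \<times> 'a tbl \<Rightarrow> 'a tbl \<times> 'a tbl \<Rightarrow> bool" where
  "dialg_iso D D' \<longleftrightarrow> (\<exists>p q r s. p*s - q*r \<noteq> 0 \<and>
     (\<forall>x y. linmap p q r s (prod_of (fst D) x y) = prod_of (fst D') (linmap p q r s x) (linmap p q r s y)
          \<and> linmap p q r s (prod_of (snd D) x y) = prod_of (snd D') (linmap p q r s x) (linmap p q r s y)))"

fun item :: "nat \<Rightarrow> 'a::field \<Rightarrow> 'a tbl \<times> 'a tbl" where
  "item (Suc 0) t = (Tbl 0 0 0 0 1 0 0 0, Tbl 0 0 0 0 t 0 0 0)"
| "item (Suc (Suc 0)) t = (Tbl 1 0 0 0 0 0 0 0, Tbl 1 0 0 0 0 0 0 0)"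
| "item (Suc (Suc (Suc 0))) t = (Tbl 1 0 0 0 0 0 0 0, Tbl 1 0 0 0 0 1 0 0)"
| "item (Suc (Suc (Suc (Suc 0)))) t = (Tbl 1 0 0 0 0 1 0 0, Tbl 1 0 0 0 0 1 0 0)"
| "item (Suc (Suc (Suc (Suc (Suc 0))))) t =
     (Tbl (1/2) 0 0 0 0 0 (1/2) 0, Tbl (1/2) 0 0 0 t 0 0 0)"
| "item (Suc (Suc (Suc (Suc (Suc (Suc 0)))))) t =
     (Tbl (1/2) 0 0 0 0 0 (1/2) 0, Tbl (1/2) 0 0 0 0 (1/2) 0 0)"
| "item (Suc (Suc (Suc (Suc (Suc (Suc (Suc 0))))))) t =
     (Tbl (1/2) 0 0 0 0 0 (1/2) 0, Tbl (1/2) 0 0 0 0 0 (1/2) 0)"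
| "item (Suc (Suc (Suc (Suc (Suc (Suc (Suc (Suc 0)))))))) t =
     (Tbl (1/2) 0 0 t 0 (1/2) (1/2) 0, Tbl (1/2) 0 0 t 0 (1/2) (1/2) 0)"
| "item _ t = (Tbl 0 0 0 0 0 0 0 0, Tbl 0 0 0 0 0 0 0 0)"

end

theory Submission
  imports Defs
begin

text \<open>If some \<open>v\<close> has \<open>v \<stileturn> v\<close> independent of \<open>v\<close>, then in the basis \<open>(v, v \<stileturn> v)\<close>
  associativity leaves only the two coordinates of \<open>v \<stileturn> v \<stileturn> v\<close> free.  Otherwise every
  \<open>x \<stileturn> x\<close> is a multiple of \<open>x\<close>, and \<open>\<stileturn>\<close> has an idempotent \<open>e\<^sub>1\<close> and an \<open>e\<^sub>2\<close> with
  \<open>e\<^sub>2 \<stileturn> e\<^sub>2 = 0\<close> and \<open>e\<^sub>1 \<stileturn> e\<^sub>2 + e\<^sub>2 \<stileturn> e\<^sub>1 = e\<^sub>2\<close>.  Further changes of basis bring \<open>\<stileturn>\<close> to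
  the left product of one of the items, and the diassociativity identities on basis vectors
  then determine \<open>\<turnstile>\<close>; when \<open>\<stileturn>\<close> has a left unit \<open>u\<close>, the identity
  \<open>u \<stileturn> (y \<stileturn> z) = u \<stileturn> (y \<turnstile> z)\<close> even forces \<open>\<turnstile> = \<stileturn>\<close>.  The items are told apart by
  whether \<open>\<stileturn>\<close> has a nonzero idempotent, a left unit or a right unit, whether \<open>\<turnstile>\<close> has a left
  unit, and whether \<open>\<stileturn> = \<turnstile>\<close>.\<close>

lemma square_eq_scaled_iff: "(x::'a::field) * x = c * x \<longleftrightarrow> x = 0 \<or> x = c"
  by auto

lemma numeral_Bit0_eq_zero_iff:
  assumes "(2::'a::field) \<noteq> 0"
  shows "(numeral (Num.Bit0 k) = (0::'a)) \<longleftrightarrow> (numeral k = (0::'a))"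
  using assms by (metis mult_2 mult_eq_0_iff numeral_Bit0)

section \<open>Change of basis\<close>

definition lin_comb :: "'a::field \<Rightarrow> 'a \<times> 'a \<Rightarrow> 'a \<Rightarrow> 'a \<times> 'a \<Rightarrow> 'a \<times> 'a" where
  "lin_comb a u b w = (a * fst u + b * fst w, a * snd u + b * snd w)"

definition basis_det :: "'a::field \<times> 'a \<Rightarrow> 'a \<times> 'a \<Rightarrow> 'a" where
  "basis_det u w = fst u * snd w - snd u * fst w"

definition coords :: "'a::field \<times> 'a \<Rightarrow> 'a \<times> 'a \<Rightarrow> 'a \<times> 'a \<Rightarrow> 'a \<times> 'a" where
  "coords u w = linmap (snd w / basis_det u w) (- fst w / basis_det u w)
                       (- snd u / basis_det u w) (fst u / basis_det u w)"

definition rebase :: "'a::field \<times> 'a \<Rightarrow> 'a \<times> 'a \<Rightarrow> 'a tbl \<Rightarrow> 'a tbl" where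
  "rebase u w T = (let c = \<lambda>x y. coords u w (prod_of T x y) in
     Tbl (fst (c u u)) (fst (c u w)) (fst (c w u)) (fst (c w w))
         (snd (c u u)) (snd (c u w)) (snd (c w u)) (snd (c w w)))"

lemma linmap_lin_comb:
  "linmap p q r s (lin_comb a x b y) = lin_comb a (linmap p q r s x) b (linmap p q r s y)"
  by (cases x; cases y) (simp add: lin_comb_def algebra_simps)

lemma prod_of_lin_comb_left:
  "prod_of T (lin_comb a x b y) z = lin_comb a (prod_of T x z) b (prod_of T y z)"
  by (cases T; cases x; cases y; cases z) (simp add: lin_comb_def algebra_simps)

lemma prod_of_lin_comb_right:
  "prod_of T z (lin_comb a x b y) = lin_comb a (prod_of T z x) b (prod_of T z y)"
  by (cases T; cases x; cases y; cases z) (simp add: lin_comb_def algebra_simps)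

lemma coords_lin_comb:
  assumes "basis_det u w \<noteq> 0"
  shows "coords u w (lin_comb a u b w) = (a, b)"
proof -
  obtain u1 u2 w1 w2 where "u = (u1, u2)" "w = (w1, w2)" by fastforce
  with assms show ?thesis
    by (simp add: coords_def lin_comb_def field_simps) (simp add: basis_det_def algebra_simps)
qed

lemma lin_comb_coords:
  assumes "basis_det u w \<noteq> 0"
  shows "lin_comb (fst (coords u w x)) u (snd (coords u w x)) w = x"
proof -
  obtain u1 u2 w1 w2 x1 x2 where "u = (u1, u2)" "w = (w1, w2)" "x = (x1, x2)" by fastforce
  with assms show ?thesis
    by (simp add: coords_def lin_comb_def field_simps) (simp add: basis_det_def algebra_simps)
qed

lemma coords_prod_of:
  assumes "basis_det u w \<noteq> 0"
  shows "coords u w (prod_of T x y) = prod_of (rebase u w T) (coords u w x) (coords u w y)"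
proof -
  obtain a b where x: "coords u w x = (a, b)" by (cases "coords u w x")
  obtain c e where y: "coords u w y = (c, e)" by (cases "coords u w y")
  have xy: "x = lin_comb a u b w" "y = lin_comb c u e w"
    using lin_comb_coords[OF assms, of x] lin_comb_coords[OF assms, of y] x y by simp_all
  have "coords u w (prod_of T x y) =
      lin_comb a (lin_comb c (coords u w (prod_of T u u)) e (coords u w (prod_of T u w)))
               b (lin_comb c (coords u w (prod_of T w u)) e (coords u w (prod_of T w w)))"
    unfolding xy prod_of_lin_comb_left prod_of_lin_comb_right coords_def linmap_lin_comb
    by (simp add: lin_comb_def algebra_simps)
  then show ?thesis
    by (simp add: x y rebase_def lin_comb_def algebra_simps)
qed

lemma rebase_eq:
  assumes "basis_det u w \<noteq> 0"
    and "prod_of T u u = lin_comb n1 u n5 w" "prod_of T u w = lin_comb n2 u n6 w"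
    and "prod_of T w u = lin_comb n3 u n7 w" "prod_of T w w = lin_comb n4 u n8 w"
  shows "rebase u w T = Tbl n1 n2 n3 n4 n5 n6 n7 n8"
  using assms by (simp add: rebase_def coords_lin_comb)

lemma dialg_iso_rebase:
  assumes "basis_det u w \<noteq> 0"
  shows "dialg_iso (A, B) (rebase u w A, rebase u w B)"
proof -
  have "(snd w / basis_det u w) * (fst u / basis_det u w)
      - (- fst w / basis_det u w) * (- snd u / basis_det u w) \<noteq> 0"
    using assms by (simp add: basis_det_def divide_simps mult.commute)
  then show ?thesis
    using coords_prod_of[OF assms] unfolding dialg_iso_def coords_def fst_conv snd_conv by blast
qed

lemma linmap_linmap:
  "linmap p q r s (linmap p' q' r' s' x) =
     linmap (p * p' + q * r') (p * q' + q * s') (r * p' + s * r') (r * q' + s * s') x"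
  by (cases x) (simp add: algebra_simps)

lemma linmap_id: "linmap 1 0 0 1 x = x"
  by (cases x) simp

lemma linmap_inverse:
  assumes "d = p * s - q * r" "d \<noteq> 0"
  shows "linmap (s / d) (- q / d) (- r / d) (p / d) (linmap p q r s x) = x"
    and "linmap p q r s (linmap (s / d) (- q / d) (- r / d) (p / d) x) = x"
proof -
  obtain x1 x2 where x: "x = (x1, x2)" by fastforce
  show "linmap (s / d) (- q / d) (- r / d) (p / d) (linmap p q r s x) = x"
    using assms(2) unfolding x by (simp add: field_simps) (simp add: assms(1) algebra_simps)
  show "linmap p q r s (linmap (s / d) (- q / d) (- r / d) (p / d) x) = x"
    using assms(2) unfolding x by (simp add: field_simps) (simp add: assms(1) algebra_simps)
qed

definition dialg_hom ::
    "('a \<times> 'a \<Rightarrow> 'a \<times> 'a) \<Rightarrow> 'a::field tbl \<times> 'a tbl \<Rightarrow> 'a tbl \<times> 'a tbl \<Rightarrow> bool" where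
  "dialg_hom f D D' \<longleftrightarrow> (\<forall>x y.
     f (prod_of (fst D) x y) = prod_of (fst D') (f x) (f y) \<and>
     f (prod_of (snd D) x y) = prod_of (snd D') (f x) (f y))"

lemma dialg_iso_iff_hom:
  "dialg_iso D D' \<longleftrightarrow> (\<exists>p q r s. p * s - q * r \<noteq> 0 \<and> dialg_hom (linmap p q r s) D D')"
  unfolding dialg_iso_def dialg_hom_def ..

lemma dialg_iso_refl: "dialg_iso D D"
  unfolding dialg_iso_iff_hom dialg_hom_def
  by (rule exI[of _ 1], rule exI[of _ 0], rule exI[of _ 0], rule exI[of _ 1]) (simp add: linmap_id)

lemma dialg_iso_trans:
  assumes "dialg_iso D1 D2" "dialg_iso D2 D3"
  shows "dialg_iso D1 D3"
proof -
  obtain p q r s where d: "p * s - q * r \<noteq> 0" and f: "dialg_hom (linmap p q r s) D1 D2"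
    using assms(1) unfolding dialg_iso_iff_hom by blast
  obtain p' q' r' s' where d': "p' * s' - q' * r' \<noteq> 0" and f': "dialg_hom (linmap p' q' r' s') D2 D3"
    using assms(2) unfolding dialg_iso_iff_hom by blast
  have "(p' * p + q' * r) * (r' * q + s' * s) - (p' * q + q' * s) * (r' * p + s' * r)
      = (p' * s' - q' * r') * (p * s - q * r)"
    by (simp add: algebra_simps)
  with d d' have "(p' * p + q' * r) * (r' * q + s' * s) - (p' * q + q' * s) * (r' * p + s' * r) \<noteq> 0"
    by simp
  moreover have "dialg_hom (linmap (p' * p + q' * r) (p' * q + q' * s) (r' * p + s' * r) (r' * q + s' * s)) D1 D3"
    using f f' unfolding dialg_hom_def by (simp add: linmap_linmap[symmetric])
  ultimately show ?thesis
    unfolding dialg_iso_iff_hom by blast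
qed

lemma dialg_isoE:
  assumes "dialg_iso D D'"
  obtains f g where "dialg_hom f D D'" "\<And>x. g (f x) = x" "\<And>x. f (g x) = x" "f (0, 0) = (0, 0)"
proof -
  obtain p q r s where d: "p * s - q * r \<noteq> 0" and f: "dialg_hom (linmap p q r s) D D'"
    using assms unfolding dialg_iso_iff_hom by blast
  define d where "d = p * s - q * r"
  show ?thesis
    using that[OF f, of "linmap (s / d) (- q / d) (- r / d) (p / d)"] linmap_inverse[OF d_def] d d_def
    by simp
qed

lemma diassoc_iso:
  assumes "dialg_iso (A, B) (A', B')" "diassoc A B"
  shows "diassoc A' B'"
proof -
  obtain f g where f: "dialg_hom f (A, B) (A', B')" and gf: "\<And>x. g (f x) = x" and fg: "\<And>x. f (g x) = x"
    using dialg_isoE[OF assms(1)] by metis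
  have L: "prod_of A' a b = f (prod_of A (g a) (g b))"
   and R: "prod_of B' a b = f (prod_of B (g a) (g b))" for a b
    using f fg unfolding dialg_hom_def by (metis fst_conv, metis snd_conv)
  show ?thesis
    using assms(2) unfolding diassoc_def Let_def L R gf by (simp del: split_paired_All)
qed

section \<open>Isomorphism invariants\<close>

definition has_idempotent :: "'a::field tbl \<Rightarrow> bool" where
  "has_idempotent T \<longleftrightarrow> (\<exists>x. x \<noteq> (0, 0) \<and> prod_of T x x = x)"

definition has_left_unit :: "'a::field tbl \<Rightarrow> bool" where
  "has_left_unit T \<longleftrightarrow> (\<exists>u. \<forall>x. prod_of T u x = x)"

definition has_right_unit :: "'a::field tbl \<Rightarrow> bool" where
  "has_right_unit T \<longleftrightarrow> (\<exists>u. \<forall>x. prod_of T x u = x)"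

lemma prod_of_inject: "prod_of A = prod_of B \<longleftrightarrow> A = B"
proof
  assume "prod_of A = prod_of B"
  then have "prod_of A x y = prod_of B x y" for x y
    by simp
  from this[of "(1, 0)" "(1, 0)"] this[of "(1, 0)" "(0, 1)"] this[of "(0, 1)" "(1, 0)"] this[of "(0, 1)" "(0, 1)"]
  show "A = B"
    by (cases A; cases B) simp
qed simp

lemma lin_comb_std_basis: "lin_comb (fst x) (1, 0) (snd x) (0, 1) = x"
  by (simp add: lin_comb_def)

lemma has_left_unit_iff:
  "has_left_unit T \<longleftrightarrow> (\<exists>u. prod_of T u (1, 0) = (1, 0) \<and> prod_of T u (0, 1) = (0, 1))"
  unfolding has_left_unit_def by (metis prod_of_lin_comb_right lin_comb_std_basis)

lemma has_right_unit_iff: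
  "has_right_unit T \<longleftrightarrow> (\<exists>u. prod_of T (1, 0) u = (1, 0) \<and> prod_of T (0, 1) u = (0, 1))"
  unfolding has_right_unit_def by (metis prod_of_lin_comb_left lin_comb_std_basis)

definition iso_invariants :: "'a::field tbl \<times> 'a tbl \<Rightarrow> bool \<times> bool \<times> bool \<times> bool \<times> bool" where
  "iso_invariants D = (has_idempotent (fst D), has_left_unit (fst D), has_right_unit (fst D),
                       fst D = snd D, has_left_unit (snd D))"

lemma iso_invariants_eq:
  assumes "dialg_iso D D'"
  shows "iso_invariants D = iso_invariants D'"
proof -
  obtain f g where f: "dialg_hom f D D'" and gf: "\<And>x. g (f x) = x" and fg: "\<And>x. f (g x) = x"
    and f0: "f (0, 0) = (0, 0)"
    using dialg_isoE[OF assms] by metis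
  have L: "prod_of (fst D') a b = f (prod_of (fst D) (g a) (g b))"
   and R: "prod_of (snd D') a b = f (prod_of (snd D) (g a) (g b))" for a b
    using f fg unfolding dialg_hom_def by metis+
  have "has_idempotent (fst D) \<longleftrightarrow> has_idempotent (fst D')"
    unfolding has_idempotent_def L by (metis gf fg f0)
  moreover have "has_left_unit (fst D) \<longleftrightarrow> has_left_unit (fst D')"
    unfolding has_left_unit_def L by (metis gf fg)
  moreover have "has_right_unit (fst D) \<longleftrightarrow> has_right_unit (fst D')"
    unfolding has_right_unit_def L by (metis gf fg)
  moreover have "fst D = snd D \<longleftrightarrow> fst D' = snd D'"
    unfolding prod_of_inject[symmetric] fun_eq_iff L R by (metis gf)
  moreover have "has_left_unit (snd D) \<longleftrightarrow> has_left_unit (snd D')"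
    unfolding has_left_unit_def R by (metis gf fg)
  ultimately show ?thesis
    unfolding iso_invariants_def by simp
qed

lemma has_idempotent_Tbl:
  assumes "a1 \<noteq> 0"
  shows "has_idempotent (Tbl a1 a2 a3 a4 0 b2 b3 b4)"
  unfolding has_idempotent_def using assms
  by (intro exI[of _ "(1 / a1, 0)"]) (simp add: power2_eq_square field_simps)

lemma iso_invariants_item:
  assumes "(2::'a::field) \<noteq> 0"
  shows "iso_invariants (item 1 (t::'a)) = (False, False, False, t = 1, False)"
    and "iso_invariants (item 2 (t::'a)) = (True, False, False, True, False)"
    and "iso_invariants (item 3 (t::'a)) = (True, False, False, False, True)"
    and "iso_invariants (item 4 (t::'a)) = (True, True, False, True, True)"
    and "iso_invariants (item 5 (t::'a)) = (True, False, True, False, False)"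
    and "iso_invariants (item 6 (t::'a)) = (True, False, True, False, True)"
    and "iso_invariants (item 7 (t::'a)) = (True, False, True, True, False)"
    and "iso_invariants (item 8 (t::'a)) = (True, True, True, True, True)"
  using assms
  by (simp_all add: iso_invariants_def eval_nat_numeral has_idempotent_Tbl has_left_unit_iff
      has_right_unit_iff) (simp add: has_idempotent_def)

lemma items_not_iso:
  assumes "(2::'a::field) \<noteq> 0" "i \<in> {1..8}" "j \<in> {1..8}" "i \<noteq> j"
  shows "\<not> dialg_iso (item i (t::'a)) (item j s)"
proof
  assume "dialg_iso (item i t) (item j s)"
  then have "iso_invariants (item i t) = iso_invariants (item j s)"
    by (rule iso_invariants_eq)
  moreover have "i \<in> {1, 2, 3, 4, 5, 6, 7, 8}" "j \<in> {1, 2, 3, 4, 5, 6, 7, 8}"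
    using assms(2,3) by auto
  ultimately show False
    \<comment> \<open>the simplifier normalises \<open>item 1\<close> to \<open>item (Suc 0)\<close>\<close>
    using assms(4) iso_invariants_item(1)[OF assms(1), unfolded One_nat_def]
    by (auto simp: iso_invariants_item[OF assms(1)] simp del: item.simps)
qed

section \<open>Classification\<close>

lemma diassocD:
  assumes "diassoc A B"
  shows "prod_of A (prod_of A x y) z = prod_of A x (prod_of A y z)"
    and "prod_of A x (prod_of A y z) = prod_of A x (prod_of B y z)"
    and "prod_of A (prod_of B x y) z = prod_of B x (prod_of A y z)"
    and "prod_of B (prod_of A x y) z = prod_of B (prod_of B x y) z"
    and "prod_of B (prod_of B x y) z = prod_of B x (prod_of B y z)"
  using assms unfolding diassoc_def Let_def by blast+

lemma diassoc_std_basis: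
  assumes "diassoc A B"
  shows "\<forall>x\<in>{(1, 0), (0, 1)}. \<forall>y\<in>{(1, 0), (0, 1)}. \<forall>z\<in>{(1, 0), (0, 1)}.
    prod_of A (prod_of A x y) z = prod_of A x (prod_of A y z) \<and>
    prod_of A x (prod_of A y z) = prod_of A x (prod_of B y z) \<and>
    prod_of A (prod_of B x y) z = prod_of B x (prod_of A y z) \<and>
    prod_of B (prod_of A x y) z = prod_of B (prod_of B x y) z \<and>
    prod_of B (prod_of B x y) z = prod_of B x (prod_of B y z)"
  using diassocD[OF assms] by blast

lemma diassoc_left_unit_eq:
  assumes "diassoc A B" "has_left_unit A"
  shows "B = A"
proof -
  obtain u where u: "\<And>x. prod_of A u x = x"
    using assms(2) unfolding has_left_unit_def by blast
  have "prod_of B y z = prod_of A y z" for y z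
    using diassocD(2)[OF assms(1), of u y z] by (simp add: u)
  then show ?thesis
    unfolding prod_of_inject[symmetric] fun_eq_iff by simp
qed

definition classified :: "'a::field tbl \<Rightarrow> 'a tbl \<Rightarrow> bool" where
  "classified A B \<longleftrightarrow> (\<exists>i\<in>{1..8}. \<exists>t. dialg_iso (A, B) (item i t))"

lemma classified_item: "i \<in> {1..8} \<Longrightarrow> item i t = (A, B) \<Longrightarrow> classified A B"
  unfolding classified_def by (metis dialg_iso_refl)

lemma classified_iso: "dialg_iso (A, B) (A', B') \<Longrightarrow> classified A' B' \<Longrightarrow> classified A B"
  unfolding classified_def by (blast intro: dialg_iso_trans)

lemma classified_by_rebase:
  assumes "basis_det u w \<noteq> 0" "diassoc A B"
    and "prod_of A u u = lin_comb n1 u n5 w" "prod_of A u w = lin_comb n2 u n6 w"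
    and "prod_of A w u = lin_comb n3 u n7 w" "prod_of A w w = lin_comb n4 u n8 w"
    and "\<And>B'. diassoc (Tbl n1 n2 n3 n4 n5 n6 n7 n8) B' \<Longrightarrow> classified (Tbl n1 n2 n3 n4 n5 n6 n7 n8) B'"
  shows "classified A B"
proof -
  have "dialg_iso (A, B) (Tbl n1 n2 n3 n4 n5 n6 n7 n8, rebase u w B)"
    using dialg_iso_rebase[OF assms(1), of A B] rebase_eq[OF assms(1,3-6)] by simp
  with assms(2,7) show ?thesis
    by (metis classified_iso diassoc_iso)
qed

lemma classified_if_left_item1:
  assumes "diassoc (Tbl 0 0 0 0 1 0 0 0) B"
  shows "classified (Tbl 0 0 0 0 1 0 0 (0::'a::field)) B"
proof -
  obtain c1 c2 c3 c4 d1 d2 d3 d4 where B: "B = Tbl c1 c2 c3 c4 d1 d2 d3 (d4::'a)"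
    by (cases B)
  have "B = Tbl 0 0 0 0 d1 0 0 0"
    using diassoc_std_basis[OF assms] unfolding B by auto
  then show ?thesis
    by (intro classified_item[of 1 d1]) simp_all
qed

lemma classified_if_left_item2:
  assumes "diassoc (Tbl 1 0 0 0 0 0 0 0) B"
  shows "classified (Tbl 1 0 0 0 0 0 0 (0::'a::field)) B"
proof -
  obtain c1 c2 c3 c4 d1 d2 d3 d4 where B: "B = Tbl c1 c2 c3 c4 d1 d2 d3 (d4::'a)"
    by (cases B)
  have "B = Tbl 1 0 0 0 0 d2 0 0" and "d2 * d2 = 1 * d2"
    using diassoc_std_basis[OF assms] unfolding B by auto
  then have "item 2 0 = (Tbl 1 0 0 0 0 0 0 0, B) \<or> item 3 0 = (Tbl 1 0 0 0 0 0 0 0, B)"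
    unfolding square_eq_scaled_iff by (auto simp: eval_nat_numeral)
  then show ?thesis
    using classified_item[of 2] classified_item[of 3] by auto
qed

lemma classified_if_left_item4:
  assumes "diassoc (Tbl 1 0 0 0 0 1 0 0) B"
  shows "classified (Tbl 1 0 0 0 0 1 0 (0::'a::field)) B"
proof -
  have "B = Tbl 1 0 0 0 0 1 0 0"
    using assms by (rule diassoc_left_unit_eq) (simp add: has_left_unit_iff)
  then show ?thesis
    by (intro classified_item[of 4 0]) (simp_all add: eval_nat_numeral)
qed

lemma classified_if_left_item8:
  assumes "(2::'a::field) \<noteq> 0" "diassoc (Tbl (1/2) 0 0 c 0 (1/2) (1/2) 0) B"
  shows "classified (Tbl (1/2) 0 0 c 0 (1/2) (1/2) (0::'a)) B"
proof -
  have "B = Tbl (1/2) 0 0 c 0 (1/2) (1/2) 0"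
    using assms(2) by (rule diassoc_left_unit_eq) (simp add: has_left_unit_iff assms(1))
  then show ?thesis
    by (intro classified_item[of 8 c]) (simp_all add: eval_nat_numeral)
qed

lemma classified_if_left_item5:
  assumes two: "(2::'a::field) \<noteq> 0" and "diassoc (Tbl (1/2) 0 0 0 0 0 (1/2) 0) B"
  shows "classified (Tbl (1/2) 0 0 0 0 0 (1/2) (0::'a)) B"
proof -
  obtain c1 c2 c3 c4 d1 d2 d3 d4 where B: "B = Tbl c1 c2 c3 c4 d1 d2 d3 (d4::'a)"
    by (cases B)
  note h = diassocD[OF assms(2)[unfolded B]]
  have "c1 * 4 = 2" and c: "c2 = 0" "c3 = 0" "c4 = 0"
    using h[of "(1,0)" "(1,0)" "(1,0)"] h[of "(1,0)" "(1,0)" "(0,1)"]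
      h[of "(1,0)" "(0,1)" "(1,0)"] h[of "(1,0)" "(0,1)" "(0,1)"] two
    by (simp_all add: numeral_Bit0_eq_zero_iff)
  then have "2 * (2 * c1) = 2 * 1"
    by (simp add: algebra_simps)
  then have "2 * c1 = 1"
    using two mult_left_cancel by blast
  with c have c: "c1 = 1/2" "c2 = 0" "c3 = 0" "c4 = 0"
    using two by (simp_all add: field_simps)
  have d4: "d4 = 0"
    using h[of "(0,1)" "(0,1)" "(0,1)"] c by simp
  have "d2 * d3 = 0" "d1 * d3 = 0" "d1 * d2 = 0" "d2 * d2 = 1/2 * d2" "d3 * d3 = 1/2 * d3"
    using h[of "(1,0)" "(0,1)" "(1,0)"] h[of "(1,0)" "(1,0)" "(1,0)"] h[of "(1,0)" "(1,0)" "(0,1)"]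
      h[of "(0,1)" "(1,0)" "(1,0)"] c d4 two
    by (auto simp add: field_simps numeral_Bit0_eq_zero_iff)
  then have "item 5 d1 = (Tbl (1/2) 0 0 0 0 0 (1/2) 0, B) \<or> item 6 0 = (Tbl (1/2) 0 0 0 0 0 (1/2) 0, B)
      \<or> item 7 0 = (Tbl (1/2) 0 0 0 0 0 (1/2) 0, B)"
    unfolding square_eq_scaled_iff using B c d4 two by (auto simp: eval_nat_numeral)
  then show ?thesis
    using classified_item[of 5] classified_item[of 6] classified_item[of 7] by auto
qed

lemma classified_if_left_e1_idempotent:
  assumes two: "(2::'a::field) \<noteq> 0" and h: "diassoc (Tbl 1 \<alpha> (- \<alpha>) 0 0 \<beta> (1 - \<beta>) 0) B"
  shows "classified (Tbl 1 \<alpha> (- \<alpha>) 0 0 \<beta> (1 - \<beta>) (0::'a)) B" (is "classified ?A B")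
proof -
  have \<alpha>: "\<alpha> = 0" and "\<beta> * \<beta> = 1 * \<beta>"
    using diassocD(1)[OF h, of "(1,0)" "(1,0)" "(0,1)"] diassocD(1)[OF h, of "(0,1)" "(1,0)" "(1,0)"]
    by (auto simp: algebra_simps)
  then consider "\<beta> = 1" | "\<beta> = 0"
    unfolding square_eq_scaled_iff by blast
  then show ?thesis
  proof cases
    case 1
    then show ?thesis
      using classified_if_left_item4 h \<alpha> by simp
  next
    case 2
    show ?thesis
    proof (rule classified_by_rebase[of "(1/2, 0)" "(0, 1)", OF _ h])
      show "basis_det (1/2, 0) (0, 1) \<noteq> (0::'a)"
        using two by (simp add: basis_det_def)
      show "prod_of ?A (1/2, 0) (1/2, 0) = lin_comb (1/2) (1/2, 0) 0 (0, 1)"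
        using \<alpha> 2 two by (simp add: lin_comb_def field_simps numeral_Bit0_eq_zero_iff)
      show "prod_of ?A (1/2, 0) (0, 1) = lin_comb 0 (1/2, 0) 0 (0, 1)"
        and "prod_of ?A (0, 1) (1/2, 0) = lin_comb 0 (1/2, 0) (1/2) (0, 1)"
        and "prod_of ?A (0, 1) (0, 1) = lin_comb 0 (1/2, 0) 0 (0, 1)"
        using \<alpha> 2 by (simp_all add: lin_comb_def)
    qed (rule classified_if_left_item5[OF two])
  qed
qed

text \<open>The left product of an algebra generated by \<open>e\<^sub>1\<close>, where \<open>e\<^sub>2 = e\<^sub>1\<^sup>2\<close> and
  \<open>e\<^sub>1\<^sup>3 = \<alpha> e\<^sub>1 + \<beta> e\<^sub>2\<close>.\<close>
lemma classified_if_left_monogenic: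
  assumes two: "(2::'a::field) \<noteq> 0"
    and h: "diassoc (Tbl 0 \<alpha> \<alpha> (\<alpha> * \<beta>) 1 \<beta> \<beta> (\<alpha> + \<beta> * \<beta>)) B"
  shows "classified (Tbl 0 \<alpha> \<alpha> (\<alpha> * \<beta>) 1 \<beta> \<beta> (\<alpha> + \<beta> * (\<beta>::'a))) B" (is "classified ?A B")
proof (cases "\<alpha> = 0")
  case False
  \<comment> \<open>\<open>2 u\<close> is the unit of the left product\<close>
  define u where "u = (- \<beta> / (2 * \<alpha>), 1 / (2 * \<alpha>))"
  define w where "w = (1 + \<beta> * \<beta> / (2 * \<alpha>), - \<beta> / (2 * \<alpha>))"
  show ?thesis
  proof (rule classified_by_rebase[of u w, OF _ h])
    show "basis_det u w \<noteq> 0"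
      using two False by (simp add: u_def w_def basis_det_def field_simps numeral_Bit0_eq_zero_iff)
    show "prod_of ?A u u = lin_comb (1/2) u 0 w"
      and "prod_of ?A u w = lin_comb 0 u (1/2) w"
      and "prod_of ?A w u = lin_comb 0 u (1/2) w"
      and "prod_of ?A w w = lin_comb (2 * \<alpha> + \<beta> * \<beta> / 2) u 0 w"
      using two False by (simp_all add: u_def w_def lin_comb_def field_simps numeral_Bit0_eq_zero_iff)
  qed (rule classified_if_left_item8[OF two])
next
  case \<alpha>: True
  show ?thesis
  proof (cases "\<beta> = 0")
    case True
    then show ?thesis
      using classified_if_left_item1 h \<alpha> by simp
  next
    case False
    define u where "u = (0 :: 'a, 1 / (\<beta> * \<beta>))"
    define w where "w = (1 :: 'a, - 1 / \<beta>)"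
    show ?thesis
    proof (rule classified_by_rebase[of u w, OF _ h])
      show "basis_det u w \<noteq> 0"
        using False by (simp add: u_def w_def basis_det_def)
      show "prod_of ?A u u = lin_comb 1 u 0 w"
        and "prod_of ?A u w = lin_comb 0 u 0 w"
        and "prod_of ?A w u = lin_comb 0 u 0 w"
        and "prod_of ?A w w = lin_comb 0 u 0 w"
        using False \<alpha> by (simp_all add: u_def w_def lin_comb_def field_simps)
    qed (rule classified_if_left_item2)
  qed
qed

lemma classified_if_square_independent:
  assumes two: "(2::'a::field) \<noteq> 0" and h: "diassoc A B"
    and d: "basis_det v (prod_of A v v) \<noteq> 0"
  shows "classified A (B::'a tbl)"
proof -
  define w where "w = prod_of A v v"
  have d': "basis_det v w \<noteq> 0"
    using d by (simp add: w_def)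
  obtain \<alpha> \<beta> where \<alpha>\<beta>: "coords v w (prod_of A v w) = (\<alpha>, \<beta>)"
    by (cases "coords v w (prod_of A v w)")
  note assoc = diassocD(1)[OF h]
  have vv: "prod_of A v v = lin_comb 0 v 1 w"
    by (simp add: w_def lin_comb_def)
  have vw: "prod_of A v w = lin_comb \<alpha> v \<beta> w"
    using lin_comb_coords[OF d', of "prod_of A v w"] \<alpha>\<beta> by simp
  have wv: "prod_of A w v = lin_comb \<alpha> v \<beta> w"
    using assoc[of v v v] vw by (simp add: w_def)
  have "prod_of A w w = prod_of A v (prod_of A v w)"
    using assoc[of v v w] by (simp add: w_def)
  also have "\<dots> = lin_comb (\<alpha> * \<beta>) v (\<alpha> + \<beta> * \<beta>) w"
    unfolding vw prod_of_lin_comb_right by (simp add: vw w_def lin_comb_def algebra_simps)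
  finally have ww: "prod_of A w w = lin_comb (\<alpha> * \<beta>) v (\<alpha> + \<beta> * \<beta>) w" .
  show ?thesis
    using classified_by_rebase[OF d' h vv vw wv ww] classified_if_left_monogenic[OF two] by blast
qed

lemma squares_parallel_normal_form:
  assumes two: "(2::'a::field) \<noteq> 0" and sq: "\<And>x. basis_det x (prod_of (A::'a tbl) x x) = 0"
  obtains a1 a3 b2 c where "A = Tbl a1 (c - a3) a3 0 0 b2 (a1 - b2) c"
proof -
  obtain a1 a2 a3 a4 b1 b2 b3 b4 where A: "A = Tbl a1 a2 a3 a4 b1 b2 b3 (b4::'a)"
    by (cases A)
  have b1: "b1 = 0" and a4: "a4 = 0"
    using sq[of "(1,0)"] sq[of "(0,1)"] unfolding A by (simp_all add: basis_det_def)
  have s1: "b2 + b3 + b4 - a1 - a2 - a3 = 0" and s2: "- b2 - b3 + b4 + a1 - a2 - a3 = 0"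
    using sq[of "(1,1)"] sq[of "(1,-1)"] b1 a4 unfolding A by (simp_all add: basis_det_def algebra_simps)
  have "2 * (b4 - (a2 + a3)) = (b2 + b3 + b4 - a1 - a2 - a3) + (- b2 - b3 + b4 + a1 - a2 - a3)"
    by (simp add: algebra_simps mult_2)
  also have "\<dots> = 0"
    using s1 s2 by simp
  finally have b4: "b4 = a2 + a3"
    using two by (metis eq_iff_diff_eq_0 mult_eq_0_iff)
  with s1 have "b3 = a1 - b2"
    by (simp add: algebra_simps)
  with A b1 a4 b4 show thesis
    by (intro that[of a1 "a2 + a3" a3 b2]) simp
qed

lemma classified_if_squares_parallel:
  assumes two: "(2::'a::field) \<noteq> 0" and h: "diassoc A B"
    and sq: "\<And>x. basis_det x (prod_of A x x) = 0" and nz: "prod_of A x y \<noteq> (0, 0)"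
  shows "classified A (B::'a tbl)"
proof -
  obtain a1 a3 b2 c where A: "A = Tbl a1 (c - a3) a3 0 0 b2 (a1 - b2) c"
    using squares_parallel_normal_form[OF two sq] .
  consider "a1 \<noteq> 0" | "a1 = 0" "c \<noteq> 0" | "a1 = 0" "c = 0"
    by blast
  then show ?thesis
  proof cases
    case 1
    define u where "u = (1 / a1, 0 :: 'a)"
    define w where "w = (c, - a1)"
    show ?thesis
    proof (rule classified_by_rebase[of u w, OF _ h])
      show "basis_det u w \<noteq> 0"
        using 1 by (simp add: u_def w_def basis_det_def)
      show "prod_of A u u = lin_comb 1 u 0 w"
        and "prod_of A u w = lin_comb (a1 * a3 - b2 * c) u (b2 / a1) w"
        and "prod_of A w u = lin_comb (- (a1 * a3 - b2 * c)) u (1 - b2 / a1) w"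
        and "prod_of A w w = lin_comb 0 u 0 w"
        using 1 by (simp_all add: A u_def w_def lin_comb_def field_simps)
    qed (rule classified_if_left_e1_idempotent[OF two])
  next
    case 2
    define u where "u = (0 :: 'a, 1 / c)"
    define w where "w = (c, 0 :: 'a)"
    show ?thesis
    proof (rule classified_by_rebase[of u w, OF _ h])
      show "basis_det u w \<noteq> 0"
        using 2 by (simp add: u_def w_def basis_det_def)
      show "prod_of A u u = lin_comb 1 u 0 w"
        and "prod_of A u w = lin_comb (- b2 * c) u (a3 / c) w"
        and "prod_of A w u = lin_comb (- (- b2 * c)) u (1 - a3 / c) w"
        and "prod_of A w w = lin_comb 0 u 0 w"
        using 2 by (simp_all add: A u_def w_def lin_comb_def field_simps)
    qed (rule classified_if_left_e1_idempotent[OF two])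
  next
    case 3
    have "b2 * b2 = 0" "a3 * a3 = 0"
      using diassocD(1)[OF h, of "(1,0)" "(1,0)" "(0,1)"] diassocD(1)[OF h, of "(0,1)" "(0,1)" "(1,0)"] 3
      by (simp_all add: A)
    with 3 have "A = Tbl 0 0 0 0 0 0 0 0"
      unfolding A by simp
    with nz show ?thesis
      by (cases x; cases y) simp
  qed
qed

lemma diassoc_classified:
  assumes "(2::'a::field) \<noteq> 0" "diassoc A B" "prod_of A x y \<noteq> (0, 0)"
  shows "classified A (B::'a tbl)"
proof (cases "\<exists>v. basis_det v (prod_of A v v) \<noteq> 0")
  case True
  then show ?thesis
    using classified_if_square_independent[OF assms(1,2)] by blast
next
  case False
  then show ?thesis
    using classified_if_squares_parallel[OF assms(1,2) _ assms(3)] by blast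
qed

theorem mainTheorem4:
  assumes "(2::'a::field) \<noteq> 0" and "(3::'a) \<noteq> 0"
  shows "(\<forall>A B :: 'a tbl. diassoc A B \<and> (\<exists>x y. prod_of A x y \<noteq> (0, 0)) \<longrightarrow>
            (\<exists>i\<in>{1..8::nat}. \<exists>t. dialg_iso (A, B) (item i t)))
       \<and> (\<forall>i\<in>{1..8::nat}. \<forall>j\<in>{1..8::nat}. \<forall>t s :: 'a.
            i \<noteq> j \<longrightarrow> \<not> dialg_iso (item i t) (item j s))"
  using diassoc_classified[OF assms(1)] items_not_iso[OF assms(1)]
  unfolding classified_def by blast

end
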